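(* Let $w\in\{0,1\}^n$ and $b\in\{0,1\}$. Let $F\vdash w$ and $F'\vdash wb$ be the closed forks built by the strategy $\mathcal{A}^*$ (on input $wb$, after processing $w$ and $wb$ respectively), so that $F\sqsubseteq F'$, and suppose in addition that $F$ is canonical. Then $F'$ is canonical.
   Context: Characteristic strings and forks. A characteristic string is $w=w_1\dots w_n\in\{0,1\}^n$; index $i$ is honest if $w_i=0$ and adversarial if $w_i=1$. A fork for $w$ is a rooted tree with edges directed away from the root $r$ and labeling $\ell:V\to\{0,\dots,n\}$ with (F1) $\ell(r)=0$; (F2) labels strictly increasing along directed paths; (F3) each honest index labels exactly one vertex; (F4) for honest $i<j$ the vertex labeled $i$ has strictly smaller depth than the vertex labeled $j$. Write $F\vdash w$. A vertex is honest if it is the root or labeled by an honest index; a tine is a directed path from the root, honest if its last vertex is honest; its length is its number of edges, $\ell(t)$ the label of its last vertex; $\mathrm{height}(F)$ is the maximal tine length. For tines $t_1,t_2$, $t_1\cap t_2$ is their longest common prefix. For $x$ a prefix of $w$, $F\vdash x$, $F'\vdash w$, $F\sqsubseteq F'$ means $F$ is a consistently labeled subgraph of $F'$. A fork is closed if every leaf is honest; a closed fork has a unique longest tine $\hat t$. Reach and relative margin. For closed $F\vdash w$ and tine $t$: $\mathrm{gap}(t)=\mathrm{length}(\hat t)-\mathrm{length}(t)$, $\mathrm{reserve}(t)=|\{i:w_i=1,\ i>\ell(t)\}|$, $\mathrm{reach}(t)=\mathrm{reserve}(t)-\mathrm{gap}(t)$; $\rho(F)=\max_t\mathrm{reach}(t)$,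 $\rho(w)=\max\{\rho(F):F\vdash w\text{ closed}\}$. For $w=xy$, tines are disjoint over $y$ if they share no edge terminating at a vertex with label $>|x|$ (a tine may be paired with itself). $\mu_x(F)=\max\min\{\mathrm{reach}(t_1),\mathrm{reach}(t_2)\}$ over pairs disjoint over $y$, and $\mu_x(y)=\max\{\mu_x(F):F\vdash xy\text{ closed}\}$. A pair $(t_\rho,t_x)$ of tines of $F\vdash xy$ witnesses $\mu_x(F)$ if they are disjoint over $y$, $\mathrm{reach}(t_\rho)=\rho(F)$ and $\mathrm{reach}(t_x)=\mu_x(F)$. Canonical forks. The trivial fork (single root vertex) is canonical for the empty string. For $n\ge1$, a fork $F_n$ for $w=w_1\dots w_n$ is canonical if it is closed, $F_{n-1}\sqsubseteq F_n$ for a canonical fork $F_{n-1}$ for $w_1\dots w_{n-1}$, $F_n$ contains an honest tine $\tau_\rho$ with $\mathrm{reach}(\tau_\rho)=\rho(F_n)=\rho(w)$, and for every decomposition $w=xy$ with $x$ a strict prefix of $w$, $F_n$ contains two honest tines $\tau_{\rho x},\tau_x$ such that $(\tau_{\rho x},\tau_x)$ witnesses $\mu_x(F_n)$ and $\mu_x(F_n)=\mu_x(y)$. Conservative extension. For closed $F\vdash w$ and a tine $s$ of $F$, a conservative extension of $s$ is a closed fork $F'\vdash w0$ with $F\sqsubseteq F'$ obtained by adding to $F$ a new honest tine $\sigma$ with $\ell(\sigma)=|w|+1$, $s$ a prefix of $\sigma$, and $\mathrm{length}(\sigma)=\mathrm{height}(F)+1$ (the new vertices between $s$ and the final vertex are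 labeled by adversarial indices). Strategy $\mathcal{A}^*$. Let $\le_\pi$ be the lexicographic order on tines, each represented by the list of its vertex labels from the root (ties broken arbitrarily but consistently). On input $w_1w_2\dots$, $F_0$ is the trivial fork. Given $F_n\vdash w_1\dots w_n$: if $w_{n+1}=1$, set $F_{n+1}=F_n$; if $w_{n+1}=0$, $F_{n+1}$ is a conservative extension of a tine $s\in F_n$ chosen as follows: if $F_n$ has no tine of reach $0$, $s$ is the unique longest tine of $F_n$; otherwise $s$ is the reach-zero tine that diverges earliest from the set of maximal-reach tines of $F_n$ (i.e., minimizes $\ell(s\cap r)$ over maximal-reach tines $r$), ties broken by smallest $\le_\pi$-rank. *)

theory Defs
  imports Main "HOL-Library.Sublist"
begin

(* Characteristic strings: bool lists, True = 1 (adversarial), False = 0 (honest).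
   Index i (1-based) refers to w ! (i - 1). *)

definition honest_idx :: "bool list \<Rightarrow> nat \<Rightarrow> bool" where
  "honest_idx w i \<longleftrightarrow> 1 \<le> i \<and> i \<le> length w \<and> \<not> w ! (i - 1)"

definition adv_idx :: "bool list \<Rightarrow> nat \<Rightarrow> bool" where
  "adv_idx w i \<longleftrightarrow> 1 \<le> i \<and> i \<le> length w \<and> w ! (i - 1)"

(* A labelled rooted tree: vertex set, root, parent map (the edge into a non-root
   vertex v is (par v, v)), and labelling. Vertices are natural numbers. *)
record fork =
  verts :: "nat set"
  root  :: nat
  par   :: "nat \<Rightarrow> nat"
  lab   :: "nat \<Rightarrow> nat"

definition is_tine :: "fork \<Rightarrow> nat list \<Rightarrow> bool" where
  "is_tine F t \<longleftrightarrow> t \<noteq> [] \<and> hd t = root F \<and> set t \<subseteq> verts F \<and>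
     (\<forall>i. Suc i < length t \<longrightarrow> t ! Suc i \<noteq> root F \<and> par F (t ! Suc i) = t ! i)"

definition tlen :: "nat list \<Rightarrow> nat" where
  "tlen t = length t - 1"

definition tlab :: "fork \<Rightarrow> nat list \<Rightarrow> nat" where
  "tlab F t = lab F (last t)"

definition is_fork :: "bool list \<Rightarrow> fork \<Rightarrow> bool" where
  "is_fork w F \<longleftrightarrow>
     finite (verts F) \<and> root F \<in> verts F \<and>
     (\<forall>v\<in>verts F. \<exists>t. is_tine F t \<and> last t = v) \<and>
     (\<forall>v\<in>verts F. lab F v \<le> length w) \<and>
     lab F (root F) = 0 \<and>
     (\<forall>t. is_tine F t \<longrightarrow> sorted_wrt (<) (map (lab F) t)) \<and>
     (\<forall>i. honest_idx w i \<longrightarrow> card {v\<in>verts F. lab F v = i} = 1) \<and>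
     (\<forall>t1 t2. is_tine F t1 \<longrightarrow> is_tine F t2 \<longrightarrow>
        honest_idx w (tlab F t1) \<longrightarrow> honest_idx w (tlab F t2) \<longrightarrow>
        tlab F t1 < tlab F t2 \<longrightarrow> tlen t1 < tlen t2)"

definition honest_vertex :: "bool list \<Rightarrow> fork \<Rightarrow> nat \<Rightarrow> bool" where
  "honest_vertex w F v \<longleftrightarrow> v = root F \<or> honest_idx w (lab F v)"

definition honest_tine :: "bool list \<Rightarrow> fork \<Rightarrow> nat list \<Rightarrow> bool" where
  "honest_tine w F t \<longleftrightarrow> is_tine F t \<and> honest_vertex w F (last t)"

definition height :: "fork \<Rightarrow> nat" where
  "height F = Max (tlen ` {t. is_tine F t})"

definition is_leaf :: "fork \<Rightarrow> nat \<Rightarrow> bool" where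
  "is_leaf F v \<longleftrightarrow> v \<in> verts F \<and> \<not> (\<exists>u\<in>verts F - {root F}. par F u = v)"

definition closed_fork :: "bool list \<Rightarrow> fork \<Rightarrow> bool" where
  "closed_fork w F \<longleftrightarrow> is_fork w F \<and> (\<forall>v. is_leaf F v \<longrightarrow> honest_vertex w F v)"

definition subfork :: "fork \<Rightarrow> fork \<Rightarrow> bool" where
  "subfork F F' \<longleftrightarrow> verts F \<subseteq> verts F' \<and> root F = root F' \<and>
     (\<forall>v\<in>verts F - {root F}. par F v = par F' v) \<and>
     (\<forall>v\<in>verts F. lab F v = lab F' v)"

definition trivial_fork :: "fork \<Rightarrow> bool" where
  "trivial_fork F \<longleftrightarrow> verts F = {root F} \<and> lab F (root F) = 0"

(* gap, reserve, reach; the unique longest tine of a closed fork has length height F *)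
definition gap :: "fork \<Rightarrow> nat list \<Rightarrow> int" where
  "gap F t = int (height F) - int (tlen t)"

definition reserve :: "bool list \<Rightarrow> fork \<Rightarrow> nat list \<Rightarrow> nat" where
  "reserve w F t = card {i. adv_idx w i \<and> tlab F t < i}"

definition reach :: "bool list \<Rightarrow> fork \<Rightarrow> nat list \<Rightarrow> int" where
  "reach w F t = int (reserve w F t) - gap F t"

definition rho :: "bool list \<Rightarrow> fork \<Rightarrow> int" where
  "rho w F = Max {reach w F t | t. is_tine F t}"

definition rho_str :: "bool list \<Rightarrow> int" where
  "rho_str w = Max {rho w F | F. closed_fork w F}"

definition tine_edges :: "nat list \<Rightarrow> (nat \<times> nat) set" where
  "tine_edges t = set (zip t (tl t))"

(* for w = x y with k = |x|: tines share no edge terminating at a vertex with label > k *)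
definition disjoint_over :: "fork \<Rightarrow> nat \<Rightarrow> nat list \<Rightarrow> nat list \<Rightarrow> bool" where
  "disjoint_over F k t1 t2 \<longleftrightarrow>
     (\<forall>e \<in> tine_edges t1 \<inter> tine_edges t2. lab F (snd e) \<le> k)"

definition mu :: "bool list \<Rightarrow> nat \<Rightarrow> fork \<Rightarrow> int" where
  "mu w k F = Max {min (reach w F t1) (reach w F t2) | t1 t2.
                   is_tine F t1 \<and> is_tine F t2 \<and> disjoint_over F k t1 t2}"

definition mu_str :: "bool list \<Rightarrow> nat \<Rightarrow> int" where
  "mu_str w k = Max {mu w k F | F. closed_fork w F}"

definition witnesses_mu :: "bool list \<Rightarrow> nat \<Rightarrow> fork \<Rightarrow> nat list \<Rightarrow> nat list \<Rightarrow> bool" where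
  "witnesses_mu w k F t1 t2 \<longleftrightarrow> is_tine F t1 \<and> is_tine F t2 \<and> disjoint_over F k t1 t2 \<and>
     reach w F t1 = rho w F \<and> reach w F t2 = mu w k F"

inductive canonical :: "bool list \<Rightarrow> fork \<Rightarrow> bool" where
  triv: "trivial_fork F \<Longrightarrow> canonical [] F"
| step: "canonical w G \<Longrightarrow> closed_fork (w @ [b]) F \<Longrightarrow> subfork G F \<Longrightarrow>
         (\<exists>t. honest_tine (w @ [b]) F t \<and> reach (w @ [b]) F t = rho (w @ [b]) F \<and>
              rho (w @ [b]) F = rho_str (w @ [b])) \<Longrightarrow>
         (\<forall>k < length (w @ [b]). \<exists>t1 t2.
              honest_tine (w @ [b]) F t1 \<and> honest_tine (w @ [b]) F t2 \<and>
              witnesses_mu (w @ [b]) k F t1 t2 \<and>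
              mu (w @ [b]) k F = mu_str (w @ [b]) k) \<Longrightarrow>
         canonical (w @ [b]) F"

definition cons_ext :: "bool list \<Rightarrow> fork \<Rightarrow> nat list \<Rightarrow> fork \<Rightarrow> bool" where
  "cons_ext w F s F' \<longleftrightarrow> closed_fork w F \<and> is_tine F s \<and>
     closed_fork (w @ [False]) F' \<and> subfork F F' \<and>
     (\<exists>new. new \<noteq> [] \<and> distinct new \<and> set new \<inter> verts F = {} \<and>
        verts F' = verts F \<union> set new \<and>
        is_tine F' (s @ new) \<and>
        lab F' (last new) = length w + 1 \<and>
        tlen (s @ new) = height F + 1 \<and>
        (\<forall>v \<in> set (butlast new). adv_idx (w @ [False]) (lab F' v)))"

definition lab_lex_le :: "fork \<Rightarrow> nat list \<Rightarrow> nat list \<Rightarrow> bool" where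
  "lab_lex_le F s t \<longleftrightarrow> map (lab F) s = map (lab F) t \<or>
     (map (lab F) s, map (lab F) t) \<in> lexord {(a, b). a < b}"

definition divg :: "bool list \<Rightarrow> fork \<Rightarrow> nat list \<Rightarrow> nat" where
  "divg w F s = Min {lab F (last (longest_common_prefix s r)) | r.
                       is_tine F r \<and> reach w F r = rho w F}"

definition astar_choice :: "bool list \<Rightarrow> fork \<Rightarrow> nat list \<Rightarrow> bool" where
  "astar_choice w F s \<longleftrightarrow> is_tine F s \<and>
     (if \<exists>t. is_tine F t \<and> reach w F t = 0
      then reach w F s = 0 \<and>
           (\<forall>t. is_tine F t \<and> reach w F t = 0 \<longrightarrow> divg w F s \<le> divg w F t) \<and>
           (\<forall>t. is_tine F t \<and> reach w F t = 0 \<and> divg w F t = divg w F s \<longrightarrow> lab_lex_le F s t)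
      else tlen s = height F)"

definition astar_step :: "bool list \<Rightarrow> bool \<Rightarrow> fork \<Rightarrow> fork \<Rightarrow> bool" where
  "astar_step w b F F' \<longleftrightarrow>
     (if b then F' = F else (\<exists>s. astar_choice w F s \<and> cons_ext w F s F'))"

(* forks reachable by running A* on a string (choices nondeterministic where the
   informal description leaves them open) *)
inductive astar_run :: "bool list \<Rightarrow> fork \<Rightarrow> bool" where
  init: "trivial_fork F \<Longrightarrow> astar_run [] F"
| step: "astar_run w F \<Longrightarrow> astar_step w b F F' \<Longrightarrow> astar_run (w @ [b]) F'"

end

theory Submission
  imports Defs
begin

(* The exact values of rho(w) and mu_x(y) are given by explicit recurrences over the string.
   No closed fork exceeds them: by induction over the time m, measure the reach of the tines
   labelled at most m against the deepest honest vertex so far, which honest vertices push one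
   level down at each honest symbol.  Conversely, A* keeps honest tines attaining them.  An
   adversarial symbol raises every reach by one.  An honest symbol lowers the old reaches by one
   and adds a tine sigma of reach 0 through the chosen tine s; of two tines disjoint over x, s is
   disjoint over x from one of them, which gives the new pairs.  The exception is 0 = mu_x < rho,
   where the new pair needs a maximal-reach tine and a reach-0 tine disjoint over x: this is
   exactly what the rule of A*, hanging sigma where reach-0 tines diverge earliest from the
   maximal-reach tines, provides.  Attaining the upper bounds, these honest tines witness rho(w)
   and every mu_x(y), which is what canonicity asks of the new fork. *)

lemma tine_nonempty: "is_tine F t \<Longrightarrow> t \<noteq> []"
  by (simp add: is_tine_def)

lemma tine_nth_0: "is_tine F t \<Longrightarrow> t ! 0 = root F"
  unfolding is_tine_def by (metis hd_conv_nth)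

lemma tine_subset_verts: "is_tine F t \<Longrightarrow> set t \<subseteq> verts F"
  by (simp add: is_tine_def)

lemma tine_nth_neq_root: "is_tine F t \<Longrightarrow> 0 < i \<Longrightarrow> i < length t \<Longrightarrow> t ! i \<noteq> root F"
  unfolding is_tine_def by (metis Suc_pred)

lemma tine_par_nth: "is_tine F t \<Longrightarrow> Suc i < length t \<Longrightarrow> par F (t ! Suc i) = t ! i"
  unfolding is_tine_def by blast

lemma tine_take: "is_tine F t \<Longrightarrow> 0 < j \<Longrightarrow> is_tine F (take j t)"
  unfolding is_tine_def by (auto simp: hd_conv_nth dest: in_set_takeD)

lemma tine_take_Suc:
  "is_tine F t \<Longrightarrow> i < length t \<Longrightarrow> is_tine F (take (Suc i) t) \<and> last (take (Suc i) t) = t ! i"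
  using tine_take[of F t "Suc i"] by (simp add: take_Suc_conv_app_nth)

lemma tine_length_ge_2: "is_tine F t \<Longrightarrow> t \<noteq> [root F] \<Longrightarrow> 2 \<le> length t"
  unfolding is_tine_def by (cases t) (auto simp: Suc_le_eq)

lemma tine_butlast:
  assumes t: "is_tine F t" and len: "2 \<le> length t"
  shows "is_tine F (butlast t) \<and> last (butlast t) = par F (last t)"
proof -
  have "is_tine F (butlast t)"
    using tine_take[OF t, of "length t - 1"] len by (simp add: butlast_conv_take)
  moreover have "par F (t ! Suc (length t - 2)) = t ! (length t - 2)"
    using tine_par_nth[OF t, of "length t - 2"] len by simp
  moreover have "Suc (length t - 2) = length t - 1" using len by simp
  moreover have "last (butlast t) = t ! (length t - 2)"
  proof -
    have "butlast t \<noteq> []" using len by (cases t) auto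
    then show ?thesis using len by (simp add: last_conv_nth nth_butlast numeral_2_eq_2)
  qed
  ultimately show ?thesis using len by (cases t) (auto simp: last_conv_nth)
qed

lemma tine_last_eq_root: "is_tine F t \<Longrightarrow> last t = root F \<Longrightarrow> t = [root F]"
proof -
  assume t: "is_tine F t" and last: "last t = root F"
  have "\<not> 1 < length t"
    using tine_nth_neq_root[OF t, of "length t - 1"] last tine_nonempty[OF t]
    by (auto simp: last_conv_nth)
  then show ?thesis using t last by (cases t) (auto dest: tine_nonempty)
qed

lemma tine_eq_if_last_eq: "is_tine F a \<Longrightarrow> is_tine F b \<Longrightarrow> last a = last b \<Longrightarrow> a = b"
proof (induction "length a" arbitrary: a b rule: less_induct)
  case less
  show ?case
  proof (cases "last a = root F")
    case True
    then show ?thesis using tine_last_eq_root less.prems by metis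
  next
    case False
    then have "2 \<le> length a" "2 \<le> length b"
      using less.prems tine_length_ge_2 by (metis last_ConsL)+
    then have "butlast a = butlast b"
      using less.hyps[of "butlast a" "butlast b"] tine_butlast less.prems by simp
    then show ?thesis using less.prems by (metis append_butlast_last_id tine_nonempty)
  qed
qed

lemma tine_take_eq_if_nth_eq:
  "is_tine F a \<Longrightarrow> is_tine F b \<Longrightarrow> i < length a \<Longrightarrow> j < length b \<Longrightarrow> a ! i = b ! j \<Longrightarrow>
   take (Suc i) a = take (Suc j) b"
  using tine_take_Suc tine_eq_if_last_eq by metis

lemma par_edge_in_tine_edges:
  assumes t: "is_tine F t" and v: "v \<in> set t" "v \<noteq> root F"
  shows "(par F v, v) \<in> tine_edges t"
proof -
  obtain i where i: "Suc i < length t" "t ! Suc i = v"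
    using v tine_nth_0[OF t] by (metis gr0_implies_Suc in_set_conv_nth not_gr_zero)
  then have "zip t (tl t) ! i = (par F v, v)"
    using tine_par_nth[OF t i(1)] i(2) by (simp add: nth_tl)
  moreover have "i < length (zip t (tl t))" using i by simp
  ultimately show ?thesis unfolding tine_edges_def by (metis nth_mem)
qed

lemma snd_tine_edge_in_set: "e \<in> tine_edges t \<Longrightarrow> snd e \<in> set t"
  unfolding tine_edges_def by (metis list.set_sel(2) tl_Nil empty_iff empty_set prod.collapse set_zip_rightD)

lemma fork_lab_root: "is_fork w F \<Longrightarrow> lab F (root F) = 0"
  by (simp add: is_fork_def)

lemma fork_root_tine: "is_fork w F \<Longrightarrow> is_tine F [root F]"
  by (simp add: is_tine_def is_fork_def)

lemma fork_tine_lab_less: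
  "is_fork w F \<Longrightarrow> is_tine F t \<Longrightarrow> i < j \<Longrightarrow> j < length t \<Longrightarrow> lab F (t ! i) < lab F (t ! j)"
  using sorted_wrt_nth_less[of "(<)" "map (lab F) t" i j] by (simp add: is_fork_def)

lemma fork_tine_lab_le:
  "is_fork w F \<Longrightarrow> is_tine F t \<Longrightarrow> i \<le> j \<Longrightarrow> j < length t \<Longrightarrow> lab F (t ! i) \<le> lab F (t ! j)"
  using fork_tine_lab_less[of w F t i j] by (cases "i = j") auto

lemma fork_tine_distinct: "is_fork w F \<Longrightarrow> is_tine F t \<Longrightarrow> distinct t"
  unfolding is_fork_def by (simp add: strict_sorted_iff distinct_map)

lemma fork_tine_index_le_lab: "is_fork w F \<Longrightarrow> is_tine F t \<Longrightarrow> i < length t \<Longrightarrow> i \<le> lab F (t ! i)"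
proof (induction i)
  case (Suc i)
  then show ?case using fork_tine_lab_less[of w F t i "Suc i"] by simp
qed simp

lemma tlen_le_tlab: "is_fork w F \<Longrightarrow> is_tine F t \<Longrightarrow> tlen t \<le> tlab F t"
  using fork_tine_index_le_lab[of w F t "length t - 1"] tine_nonempty[of F t]
  by (simp add: tlen_def tlab_def last_conv_nth)

lemma tlab_le_length: "is_fork w F \<Longrightarrow> is_tine F t \<Longrightarrow> tlab F t \<le> length w"
  unfolding is_fork_def tlab_def using tine_subset_verts tine_nonempty by (meson last_in_set subsetD)

lemma fork_lab_le_length: "is_fork w F \<Longrightarrow> is_tine F t \<Longrightarrow> v \<in> set t \<Longrightarrow> lab F v \<le> length w"
  unfolding is_fork_def using tine_subset_verts by blast

lemma fork_tine_butlast_tlab_less: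
  assumes F: "is_fork w F" and t: "is_tine F t" and len: "2 \<le> length t"
  shows "tlab F (butlast t) < tlab F t"
proof -
  have "butlast t \<noteq> []" "t \<noteq> []" using len by (cases t; auto)+
  then have "last (butlast t) = t ! (length t - 2)" "last t = t ! (length t - 1)"
    using len by (simp_all add: last_conv_nth nth_butlast numeral_2_eq_2)
  then show ?thesis using fork_tine_lab_less[OF F t, of "length t - 2" "length t - 1"] len
    by (simp add: tlab_def)
qed

lemma fork_tine_neq_root_if_tlab_pos: "is_fork w F \<Longrightarrow> 0 < tlab F t \<Longrightarrow> t \<noteq> [root F]"
  by (auto simp: tlab_def fork_lab_root)

lemma finite_fork_tines: "is_fork w F \<Longrightarrow> finite {t. is_tine F t}"
proof -
  assume F: "is_fork w F"
  have "{t. is_tine F t} \<subseteq> {t. set t \<subseteq> verts F \<and> length t \<le> card (verts F)}"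
  proof
    fix t assume "t \<in> {t. is_tine F t}"
    then have t: "is_tine F t" by simp
    then have set: "set t \<subseteq> verts F" by (rule tine_subset_verts)
    have "length t = card (set t)" using F t fork_tine_distinct distinct_card by metis
    also have "\<dots> \<le> card (verts F)" using F set by (simp add: card_mono is_fork_def)
    finally show "t \<in> {t. set t \<subseteq> verts F \<and> length t \<le> card (verts F)}" using set by simp
  qed
  moreover have "finite {t. set t \<subseteq> verts F \<and> length t \<le> card (verts F)}"
    using F by (simp add: finite_lists_length_le is_fork_def)
  ultimately show ?thesis by (rule finite_subset)
qed

lemma tlen_le_height: "is_fork w F \<Longrightarrow> is_tine F t \<Longrightarrow> tlen t \<le> height F"
  unfolding height_def using finite_fork_tines by (simp add: Max_ge)

lemma height_attained: "is_fork w F \<Longrightarrow> \<exists>t. is_tine F t \<and> tlen t = height F"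
proof -
  assume F: "is_fork w F"
  have "height F \<in> tlen ` {t. is_tine F t}" unfolding height_def
    using finite_fork_tines[OF F] fork_root_tine[OF F] by (intro Max_in) auto
  then show ?thesis by auto
qed

lemma height_le_length: "is_fork w F \<Longrightarrow> height F \<le> length w"
  using height_attained tlen_le_tlab tlab_le_length by (metis le_trans)

lemma fork_honest_depth_less:
  "is_fork w F \<Longrightarrow> is_tine F t1 \<Longrightarrow> is_tine F t2 \<Longrightarrow> honest_idx w (tlab F t1) \<Longrightarrow>
   honest_idx w (tlab F t2) \<Longrightarrow> tlab F t1 < tlab F t2 \<Longrightarrow> tlen t1 < tlen t2"
  unfolding is_fork_def by blast

lemma fork_honest_label_unique:
  assumes F: "is_fork w F" and "honest_idx w i"
  obtains v where "{v \<in> verts F. lab F v = i} = {v}"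
proof -
  have "card {v \<in> verts F. lab F v = i} = 1" using assms unfolding is_fork_def by blast
  then show ?thesis using that card_1_singletonE by blast
qed

lemma fork_honest_tine_exists:
  assumes F: "is_fork w F" and i: "honest_idx w i"
  shows "\<exists>t. is_tine F t \<and> tlab F t = i"
proof -
  obtain v where "{v \<in> verts F. lab F v = i} = {v}" using fork_honest_label_unique[OF F i] .
  moreover obtain t where "is_tine F t" "last t = v"
    using F calculation unfolding is_fork_def by blast
  ultimately show ?thesis by (auto simp: tlab_def)
qed

lemma fork_honest_tine_unique:
  assumes F: "is_fork w F" and i: "honest_idx w i" and t: "is_tine F t1" "is_tine F t2"
    and lab: "tlab F t1 = i" "tlab F t2 = i"
  shows "t1 = t2"
proof -
  obtain v where v: "{v \<in> verts F. lab F v = i} = {v}" using fork_honest_label_unique[OF F i] .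
  have "last t1 = v" "last t2 = v"
    using v t lab tine_subset_verts tine_nonempty last_in_set by (fastforce simp: tlab_def)+
  then show ?thesis using t tine_eq_if_last_eq by metis
qed

lemma fork_tine_mem_if_lab_le:
  assumes F: "is_fork w F" and a: "is_tine F a" and b: "is_tine F b"
    and v: "v \<in> set a" "v \<in> set b" and u: "u \<in> set a" "lab F u \<le> lab F v"
  shows "u \<in> set b"
proof -
  obtain i j i' where i: "i < length a" "a ! i = v" and j: "j < length a" "a ! j = u"
    and i': "i' < length b" "b ! i' = v"
    using v u(1) by (meson in_set_conv_nth)
  have "j \<le> i" using fork_tine_lab_less[OF F a, of i j] i j u(2) by (cases "j \<le> i") auto
  then have "u \<in> set (take (Suc i) a)" using j by (auto simp: in_set_conv_nth)
  then show ?thesis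
    using tine_take_eq_if_nth_eq[OF a b i(1) i'(1)] i i' by (metis in_set_takeD)
qed

section \<open>Disjointness over a prefix\<close>

lemma disjoint_overI: "(\<forall>v \<in> set a \<inter> set b. lab F v \<le> k) \<Longrightarrow> disjoint_over F k a b"
  unfolding disjoint_over_def using snd_tine_edge_in_set by blast

lemma disjoint_over_iff:
  assumes F: "is_fork w F" and a: "is_tine F a" and b: "is_tine F b"
  shows "disjoint_over F k a b \<longleftrightarrow> (\<forall>v \<in> set a \<inter> set b. lab F v \<le> k)"
proof
  assume disj: "disjoint_over F k a b"
  show "\<forall>v \<in> set a \<inter> set b. lab F v \<le> k"
  proof
    fix v assume v: "v \<in> set a \<inter> set b"
    show "lab F v \<le> k"
    proof (cases "v = root F")
      case False
      then have "(par F v, v) \<in> tine_edges a \<inter> tine_edges b"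
        using par_edge_in_tine_edges a b v by auto
      then have "lab F (snd (par F v, v)) \<le> k" using disj unfolding disjoint_over_def by blast
      then show ?thesis by simp
    qed (simp add: fork_lab_root[OF F])
  qed
qed (rule disjoint_overI)

lemma disjoint_over_commute: "disjoint_over F k a b \<longleftrightarrow> disjoint_over F k b a"
  unfolding disjoint_over_def by blast

lemma disjoint_over_length: "is_fork w F \<Longrightarrow> is_tine F a \<Longrightarrow> disjoint_over F (length w) a b"
  by (rule disjoint_overI) (use fork_lab_le_length in blast)

lemma disjoint_over_self_iff:
  assumes F: "is_fork w F" and t: "is_tine F t"
  shows "disjoint_over F k t t \<longleftrightarrow> tlab F t \<le> k"
proof -
  have "lab F v \<le> tlab F t" if "v \<in> set t" for v
    using that fork_tine_lab_le[OF F t, of _ "length t - 1"] tine_nonempty[OF t]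
    by (auto simp: tlab_def last_conv_nth in_set_conv_nth)
  then show ?thesis unfolding disjoint_over_iff[OF F t t] tlab_def
    using tine_nonempty[OF t] by (auto simp: tlab_def intro: le_trans)
qed

lemma disjoint_over_ultrametric:
  assumes F: "is_fork w F" and s: "is_tine F s" and t: "is_tine F t1" "is_tine F t2"
    and disj: "disjoint_over F k t1 t2"
  shows "disjoint_over F k s t1 \<or> disjoint_over F k s t2"
proof (rule ccontr)
  assume "\<not> ?thesis"
  then have "\<not> (\<forall>v \<in> set s \<inter> set t1. lab F v \<le> k)" "\<not> (\<forall>v \<in> set s \<inter> set t2. lab F v \<le> k)"
    using disjoint_over_iff[OF F s] t by auto
  then obtain v1 v2 where v: "v1 \<in> set s" "v1 \<in> set t1" "k < lab F v1"
     "v2 \<in> set s" "v2 \<in> set t2" "k < lab F v2"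
    by auto
  have "v1 \<in> set t2 \<or> v2 \<in> set t1"
  proof (cases "lab F v1 \<le> lab F v2")
    case True
    then show ?thesis using fork_tine_mem_if_lab_le[OF F s t(2) v(4,5) v(1)] by simp
  next
    case False
    then show ?thesis using fork_tine_mem_if_lab_le[OF F s t(1) v(1,2) v(4)] by simp
  qed
  moreover have "\<forall>v \<in> set t1 \<inter> set t2. lab F v \<le> k" using disj disjoint_over_iff[OF F t] by blast
  ultimately show False using v by (meson IntI leD)
qed

lemma disjoint_over_iff_lcp:
  assumes F: "is_fork w F" and a: "is_tine F a" and b: "is_tine F b"
  shows "disjoint_over F k a b \<longleftrightarrow> lab F (last (longest_common_prefix a b)) \<le> k"
proof -
  define l where "l = longest_common_prefix a b"
  have l: "prefix l a" "prefix l b"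
    unfolding l_def by (simp_all add: longest_common_prefix_prefix1 longest_common_prefix_prefix2)
  obtain xs ys where "a = root F # xs" "b = root F # ys"
    using a b unfolding is_tine_def by (metis list.collapse)
  then have l_ne: "l \<noteq> []" unfolding l_def by simp
  then have last_l: "last l \<in> set a \<inter> set b" using l set_mono_prefix by fastforce
  have "lab F v \<le> lab F (last l)" if v: "v \<in> set a" "v \<in> set b" for v
  proof -
    obtain i i' where i: "i < length a" "a ! i = v" and i': "i' < length b" "b ! i' = v"
      using v by (meson in_set_conv_nth)
    have "prefix (take (Suc i) a) l" unfolding l_def
      using tine_take_eq_if_nth_eq[OF a b i(1) i'(1)] i i'
      by (metis longest_common_prefix_max_prefix take_is_prefix)
    then have il: "Suc i \<le> length l" using i prefix_length_le by fastforce
    obtain zs where zs: "a = l @ zs" using l(1) by (auto simp: prefix_def)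
    then have "last l = a ! (length l - 1)" using l_ne by (simp add: last_conv_nth nth_append)
    then show ?thesis using fork_tine_lab_le[OF F a, of i "length l - 1"] il zs i by simp
  qed
  then show ?thesis unfolding disjoint_over_iff[OF F a b] l_def[symmetric]
    using last_l by (blast intro: le_trans)
qed

lemma fork_tine_butlast:
  assumes F: "is_fork w F" and t: "is_tine F t" and nr: "t \<noteq> [root F]"
  shows "is_tine F (butlast t) \<and> tlab F (butlast t) < tlab F t \<and> tlen (butlast t) + 1 = tlen t"
proof -
  have len: "2 \<le> length t" using tine_length_ge_2[OF t nr] .
  then show ?thesis
    using tine_butlast[OF t len] fork_tine_butlast_tlab_less[OF F t len] by (simp add: tlen_def)
qed

lemma tine_edges_mono_prefix: "prefix a b \<Longrightarrow> tine_edges a \<subseteq> tine_edges b"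
proof -
  have "set (zip xs (tl xs)) \<subseteq> set (zip (xs @ ys) (tl (xs @ ys)))" for xs ys :: "'a list"
    by (induction xs) (auto simp: tl_append split: list.splits)
  then show "prefix a b \<Longrightarrow> tine_edges a \<subseteq> tine_edges b"
    unfolding tine_edges_def prefix_def by blast
qed

lemma disjoint_over_mono_prefix:
  "disjoint_over F k a b \<Longrightarrow> prefix a' a \<Longrightarrow> prefix b' b \<Longrightarrow> disjoint_over F k a' b'"
  unfolding disjoint_over_def using tine_edges_mono_prefix by blast

section \<open>The recurrences for reach and relative margin\<close>

definition rho_step :: "int \<Rightarrow> bool \<Rightarrow> int" where
  "rho_step r c = (if c then r + 1 else max 0 (r - 1))"

definition mu_step :: "int \<Rightarrow> int \<Rightarrow> bool \<Rightarrow> int" where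
  "mu_step r m c = (if c then m + 1 else if m = 0 \<and> m < r then 0 else m - 1)"

definition rho_mu_step :: "int \<times> int \<Rightarrow> bool \<Rightarrow> int \<times> int" where
  "rho_mu_step p c = (rho_step (fst p) c, mu_step (fst p) (snd p) c)"

definition rho_rec :: "bool list \<Rightarrow> int" where
  "rho_rec w = foldl rho_step 0 w"

text \<open>For \<open>w = x y\<close> with \<open>|x| = k\<close>, the pair (\<open>\<rho>\<close>, \<open>\<mu>\<^sub>x\<close>) starts at (\<open>\<rho>(x)\<close>, \<open>\<rho>(x)\<close>) and is updated
  along \<open>y\<close>.\<close>

definition mu_rec :: "bool list \<Rightarrow> nat \<Rightarrow> int" where
  "mu_rec w k = snd (foldl rho_mu_step (rho_rec (take k w), rho_rec (take k w)) (drop k w))"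

lemma rho_rec_Nil [simp]: "rho_rec [] = 0"
  by (simp add: rho_rec_def)

lemma rho_rec_snoc: "rho_rec (w @ [c]) = rho_step (rho_rec w) c"
  by (simp add: rho_rec_def)

lemma rho_rec_nonneg: "0 \<le> rho_rec w"
  by (induction w rule: rev_induct) (auto simp: rho_rec_snoc rho_step_def)

lemma fst_foldl_rho_mu_step: "fst (foldl rho_mu_step (rho_rec x, m) y) = rho_rec (x @ y)"
proof (induction y arbitrary: x m)
  case (Cons c y)
  then show ?case
    using Cons.IH[of "x @ [c]"] by (simp add: rho_mu_step_def rho_rec_snoc)
qed simp

lemma mu_rec_snoc: "k \<le> length w \<Longrightarrow> mu_rec (w @ [c]) k = mu_step (rho_rec w) (mu_rec w k) c"
  using fst_foldl_rho_mu_step[of "take k w" "rho_rec (take k w)" "drop k w"]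
  by (simp add: mu_rec_def rho_mu_step_def)

lemma mu_rec_length: "mu_rec w (length w) = rho_rec w"
  by (simp add: mu_rec_def)

lemma mu_rec_le_rho_rec: "k \<le> length w \<Longrightarrow> mu_rec w k \<le> rho_rec w"
proof (induction w rule: rev_induct)
  case (snoc c w)
  show ?case
  proof (cases "k = length (w @ [c])")
    case False
    then have k: "k \<le> length w" using snoc.prems by simp
    then show ?thesis using snoc.IH mu_rec_snoc[OF k] rho_rec_snoc[of w c]
      by (auto simp: mu_step_def rho_step_def)
  qed (use mu_rec_length[of "w @ [c]"] in simp)
qed (simp add: mu_rec_def)

section \<open>No closed fork exceeds the recurrences\<close>

definition adv_count :: "bool list \<Rightarrow> nat \<Rightarrow> nat \<Rightarrow> nat" where
  "adv_count w l m = card {i. adv_idx w i \<and> l < i \<and> i \<le> m}"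

definition honest_tines_upto :: "bool list \<Rightarrow> fork \<Rightarrow> nat \<Rightarrow> nat list set" where
  "honest_tines_upto w F m = {t. is_tine F t \<and> honest_idx w (tlab F t) \<and> tlab F t \<le> m}"

definition honest_depth :: "bool list \<Rightarrow> fork \<Rightarrow> nat \<Rightarrow> nat" where
  "honest_depth w F m = Max (insert 0 (tlen ` honest_tines_upto w F m))"

text \<open>The reach of a tine at time \<open>m\<close>, i.e. in the part of the fork labelled at most \<open>m\<close>, except that
  the gap is measured from the deepest honest vertex rather than the deepest vertex: honest vertices
  are forced deeper in the order of their labels, adversarial ones are not.\<close>

definition rel_reach :: "bool list \<Rightarrow> fork \<Rightarrow> nat \<Rightarrow> nat list \<Rightarrow> int" where
  "rel_reach w F m t = int (adv_count w (tlab F t) m) + int (tlen t) - int (honest_depth w F m)"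

definition rel_reach_bounded :: "bool list \<Rightarrow> fork \<Rightarrow> nat \<Rightarrow> bool" where
  "rel_reach_bounded w F m \<longleftrightarrow>
     (\<forall>t. is_tine F t \<and> tlab F t \<le> m \<longrightarrow> rel_reach w F m t \<le> rho_rec (take m w)) \<and>
     (\<forall>k \<le> m. \<forall>t1 t2. is_tine F t1 \<and> is_tine F t2 \<and> tlab F t1 \<le> m \<and> tlab F t2 \<le> m \<and>
        disjoint_over F k t1 t2 \<longrightarrow> min (rel_reach w F m t1) (rel_reach w F m t2) \<le> mu_rec (take m w) k)"

lemma finite_honest_tines_upto: "is_fork w F \<Longrightarrow> finite (honest_tines_upto w F m)"
  using finite_fork_tines by (rule finite_subset[rotated]) (auto simp: honest_tines_upto_def)

lemma honest_depth_ge: "is_fork w F \<Longrightarrow> t \<in> honest_tines_upto w F m \<Longrightarrow> tlen t \<le> honest_depth w F m"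
  using finite_honest_tines_upto unfolding honest_depth_def by simp

lemma honest_depth_attained:
  "is_fork w F \<Longrightarrow> honest_depth w F m = 0 \<or> (\<exists>t \<in> honest_tines_upto w F m. honest_depth w F m = tlen t)"
proof -
  assume F: "is_fork w F"
  have "honest_depth w F m \<in> insert 0 (tlen ` honest_tines_upto w F m)"
    unfolding honest_depth_def using finite_honest_tines_upto[OF F] by (intro Max_in) auto
  then show ?thesis by auto
qed

lemma honest_depth_le_height: "is_fork w F \<Longrightarrow> honest_depth w F m \<le> height F"
  using honest_depth_attained[of w F m] tlen_le_height by (auto simp: honest_tines_upto_def)

lemma adv_count_Suc:
  "m < length w \<Longrightarrow> adv_count w l (Suc m) = adv_count w l m + (if w ! m \<and> l \<le> m then 1 else 0)"
proof -
  assume m: "m < length w"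
  have fin: "finite {i. adv_idx w i \<and> l < i \<and> i \<le> m}" by (rule finite_subset[of _ "{..m}"]) auto
  have "{i. adv_idx w i \<and> l < i \<and> i \<le> Suc m} =
        {i. adv_idx w i \<and> l < i \<and> i \<le> m} \<union> (if w ! m \<and> l \<le> m then {Suc m} else {})"
    using m by (auto simp: adv_idx_def le_Suc_eq)
  then show ?thesis using fin unfolding adv_count_def by auto
qed

lemma adv_count_eq_0: "m \<le> l \<Longrightarrow> adv_count w l m = 0"
  unfolding adv_count_def by auto

lemma rel_reach_bounded_0: "is_fork w F \<Longrightarrow> rel_reach_bounded w F 0"
proof -
  assume F: "is_fork w F"
  have "rel_reach w F 0 t \<le> 0" if "is_tine F t" "tlab F t \<le> 0" for t
    using tlen_le_tlab[OF F that(1)] that(2) by (simp add: rel_reach_def adv_count_eq_0)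
  then show ?thesis unfolding rel_reach_bounded_def by (fastforce simp: mu_rec_def)
qed

lemma rel_reach_adversarial_Suc:
  assumes F: "is_fork w F" and m: "m < length w" "w ! m"
    and t: "is_tine F t" "tlab F t \<le> Suc m"
  obtains t' where "is_tine F t'" "tlab F t' \<le> m" "prefix t' t"
    "rel_reach w F (Suc m) t \<le> rel_reach w F m t' + 1"
proof -
  have "honest_tines_upto w F (Suc m) = honest_tines_upto w F m"
    using m by (auto simp: honest_tines_upto_def honest_idx_def le_Suc_eq)
  then have depth: "honest_depth w F (Suc m) = honest_depth w F m"
    by (simp add: honest_depth_def)
  show ?thesis
  proof (cases "tlab F t = Suc m")
    case True
    then have "t \<noteq> [root F]" using fork_tine_neq_root_if_tlab_pos[OF F] by simp
    then have "is_tine F (butlast t)" "tlab F (butlast t) \<le> m" "tlen (butlast t) + 1 = tlen t"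
      using fork_tine_butlast[OF F t(1)] True by auto
    moreover have "rel_reach w F (Suc m) t \<le> rel_reach w F m (butlast t) + 1"
      using True depth calculation(3) by (simp add: rel_reach_def adv_count_eq_0)
    ultimately show ?thesis using that prefixeq_butlast by blast
  next
    case False
    then show ?thesis
      using that[of t] t m depth by (simp add: rel_reach_def adv_count_Suc)
  qed
qed

lemma rel_reach_bounded_SucI:
  assumes m: "m < length w"
    and rho: "\<And>t. is_tine F t \<Longrightarrow> tlab F t \<le> Suc m \<Longrightarrow>
      rel_reach w F (Suc m) t \<le> rho_rec (take (Suc m) w)"
    and mu: "\<And>k t1 t2. k \<le> m \<Longrightarrow> is_tine F t1 \<Longrightarrow> is_tine F t2 \<Longrightarrow>
      tlab F t1 \<le> Suc m \<Longrightarrow> tlab F t2 \<le> Suc m \<Longrightarrow> disjoint_over F k t1 t2 \<Longrightarrow>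
      min (rel_reach w F (Suc m) t1) (rel_reach w F (Suc m) t2) \<le> mu_rec (take (Suc m) w) k"
  shows "rel_reach_bounded w F (Suc m)"
proof -
  have "mu_rec (take (Suc m) w) (Suc m) = rho_rec (take (Suc m) w)"
    using mu_rec_length[of "take (Suc m) w"] m by simp
  then show ?thesis
    unfolding rel_reach_bounded_def using rho mu by (auto simp: le_Suc_eq min_le_iff_disj)
qed

lemma rel_reach_bounded_adversarial_Suc:
  assumes F: "is_fork w F" and m: "m < length w" "w ! m" and IH: "rel_reach_bounded w F m"
  shows "rel_reach_bounded w F (Suc m)"
proof (rule rel_reach_bounded_SucI[OF m(1)])
  have take: "take (Suc m) w = take m w @ [True]" using m by (simp add: take_Suc_conv_app_nth)
  fix t assume t: "is_tine F t" "tlab F t \<le> Suc m"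
  obtain t' where "is_tine F t'" "tlab F t' \<le> m" "rel_reach w F (Suc m) t \<le> rel_reach w F m t' + 1"
    using rel_reach_adversarial_Suc[OF F m t] by blast
  then have "rel_reach w F (Suc m) t \<le> rho_rec (take m w) + 1"
    using IH unfolding rel_reach_bounded_def by fastforce
  then show "rel_reach w F (Suc m) t \<le> rho_rec (take (Suc m) w)"
    using take by (simp add: rho_rec_snoc rho_step_def)
next
  fix k t1 t2 assume k: "k \<le> m" and t: "is_tine F t1" "is_tine F t2" "tlab F t1 \<le> Suc m"
    "tlab F t2 \<le> Suc m" and disj: "disjoint_over F k t1 t2"
  obtain t1' t2' where t1': "is_tine F t1'" "tlab F t1' \<le> m" "prefix t1' t1"
    "rel_reach w F (Suc m) t1 \<le> rel_reach w F m t1' + 1"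
    and t2': "is_tine F t2'" "tlab F t2' \<le> m" "prefix t2' t2"
    "rel_reach w F (Suc m) t2 \<le> rel_reach w F m t2' + 1"
    using rel_reach_adversarial_Suc[OF F m] t by metis
  have "disjoint_over F k t1' t2'" using disjoint_over_mono_prefix disj t1'(3) t2'(3) by blast
  then have "min (rel_reach w F m t1') (rel_reach w F m t2') \<le> mu_rec (take m w) k"
    using IH k t1' t2' unfolding rel_reach_bounded_def by blast
  moreover have "mu_rec (take (Suc m) w) k = mu_rec (take m w) k + 1"
    using mu_rec_snoc[of k "take m w" True] k m by (simp add: mu_step_def take_Suc_conv_app_nth)
  ultimately show "min (rel_reach w F (Suc m) t1) (rel_reach w F (Suc m) t2) \<le> mu_rec (take (Suc m) w) k"
    using t1'(4) t2'(4) by linarith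
qed

lemma honest_idx_Suc: "m < length w \<Longrightarrow> honest_idx w (Suc m) \<longleftrightarrow> \<not> w ! m"
  by (simp add: honest_idx_def)

lemma honest_depth_honest_Suc:
  assumes F: "is_fork w F" and m: "m < length w" "\<not> w ! m"
  obtains th where "is_tine F th" "tlab F th = Suc m"
    "honest_depth w F m < tlen th" "tlen th \<le> honest_depth w F (Suc m)"
proof -
  have hS: "honest_idx w (Suc m)" using m honest_idx_Suc by simp
  obtain th where th: "is_tine F th" "tlab F th = Suc m" using fork_honest_tine_exists[OF F hS] by blast
  have "th \<noteq> [root F]" using fork_tine_neq_root_if_tlab_pos[OF F] th(2) by simp
  then have "0 < tlen th" using tine_length_ge_2[OF th(1)] by (simp add: tlen_def)
  moreover have "tlen u < tlen th" if "u \<in> honest_tines_upto w F m" for u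
    using that fork_honest_depth_less[OF F, of u th] th hS by (auto simp: honest_tines_upto_def)
  ultimately have "honest_depth w F m < tlen th" using honest_depth_attained[OF F, of m] by auto
  moreover have "tlen th \<le> honest_depth w F (Suc m)"
    using honest_depth_ge[OF F] th hS by (simp add: honest_tines_upto_def)
  ultimately show ?thesis using that th by blast
qed

lemma rel_reach_honest_Suc:
  assumes F: "is_fork w F" and m: "m < length w" "\<not> w ! m"
  shows "rel_reach w F (Suc m) t \<le> rel_reach w F m t - 1"
  using honest_depth_honest_Suc[OF F m] m by (fastforce simp: rel_reach_def adv_count_Suc)

lemma rel_reach_new_honest_tine:
  assumes F: "is_fork w F" and m: "m < length w" "\<not> w ! m"
    and t: "is_tine F t" "tlab F t = Suc m"
  shows "rel_reach w F (Suc m) t \<le> 0" and "0 \<le> rel_reach w F m (butlast t)"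
proof -
  obtain th where th: "is_tine F th" "tlab F th = Suc m"
    "honest_depth w F m < tlen th" "tlen th \<le> honest_depth w F (Suc m)"
    using honest_depth_honest_Suc[OF F m] .
  have "honest_idx w (Suc m)" using m honest_idx_Suc by simp
  then have "t = th" using fork_honest_tine_unique[OF F _ t(1) th(1)] t(2) th(2) by simp
  moreover have "tlen (butlast t) + 1 = tlen t"
    using fork_tine_butlast[OF F t(1)] fork_tine_neq_root_if_tlab_pos[OF F] t(2) by simp
  ultimately show "rel_reach w F (Suc m) t \<le> 0" and "0 \<le> rel_reach w F m (butlast t)"
    using th t(2) by (simp_all add: rel_reach_def adv_count_eq_0)
qed

lemma min_rel_reach_new_old_honest_Suc:
  assumes F: "is_fork w F" and m: "m < length w" "\<not> w ! m" and IH: "rel_reach_bounded w F m"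
    and k: "k \<le> m" and t1: "is_tine F t1" "tlab F t1 = Suc m" and t2: "is_tine F t2" "tlab F t2 \<le> m"
    and disj: "disjoint_over F k t1 t2"
  shows "min (rel_reach w F (Suc m) t1) (rel_reach w F (Suc m) t2)
           \<le> mu_step (rho_rec (take m w)) (mu_rec (take m w) k) False"
proof -
  have b: "is_tine F (butlast t1)" "tlab F (butlast t1) \<le> m"
    using fork_tine_butlast[OF F t1(1)] fork_tine_neq_root_if_tlab_pos[OF F] t1(2) by auto
  have "disjoint_over F k (butlast t1) t2"
    using disjoint_over_mono_prefix[OF disj prefixeq_butlast] by simp
  then have "min (rel_reach w F m (butlast t1)) (rel_reach w F m t2) \<le> mu_rec (take m w) k"
    using IH k b t2 unfolding rel_reach_bounded_def by blast
  moreover have "rel_reach w F m t2 \<le> rho_rec (take m w)"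
    using IH t2 unfolding rel_reach_bounded_def by blast
  moreover note rel_reach_new_honest_tine[OF F m t1] rel_reach_honest_Suc[OF F m, of t2]
  ultimately show ?thesis unfolding mu_step_def by auto
qed

lemma min_rel_reach_honest_Suc:
  assumes F: "is_fork w F" and m: "m < length w" "\<not> w ! m" and IH: "rel_reach_bounded w F m"
    and k: "k \<le> m" and t: "is_tine F t1" "is_tine F t2" "tlab F t1 \<le> Suc m" "tlab F t2 \<le> Suc m"
    and disj: "disjoint_over F k t1 t2"
  shows "min (rel_reach w F (Suc m) t1) (rel_reach w F (Suc m) t2) \<le> mu_rec (take (Suc m) w) k"
proof -
  have mu: "mu_rec (take (Suc m) w) k = mu_step (rho_rec (take m w)) (mu_rec (take m w) k) False"
    using mu_rec_snoc[of k "take m w" False] k m by (simp add: take_Suc_conv_app_nth)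
  consider "tlab F t1 = Suc m" "tlab F t2 = Suc m" | "tlab F t1 = Suc m" "tlab F t2 \<le> m"
    | "tlab F t1 \<le> m" "tlab F t2 = Suc m" | "tlab F t1 \<le> m" "tlab F t2 \<le> m"
    using t by linarith
  then show ?thesis
  proof cases
    case 1
    moreover have "honest_idx w (Suc m)" using m honest_idx_Suc by simp
    ultimately have "t1 = t2" using fork_honest_tine_unique[OF F _ t(1,2)] by simp
    then show ?thesis using disj disjoint_over_self_iff[OF F t(1)] 1 k by simp
  next
    case 2
    then show ?thesis using min_rel_reach_new_old_honest_Suc[OF F m IH k] t disj mu by simp
  next
    case 3
    then show ?thesis
      using min_rel_reach_new_old_honest_Suc[OF F m IH k, of t2 t1] t disj mu
      by (simp add: disjoint_over_commute min.commute)
  next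
    case 4
    then have "min (rel_reach w F m t1) (rel_reach w F m t2) \<le> mu_rec (take m w) k"
      using IH k t disj unfolding rel_reach_bounded_def by blast
    moreover have "mu_rec (take m w) k - 1 \<le> mu_rec (take (Suc m) w) k"
      using mu by (simp add: mu_step_def)
    ultimately show ?thesis
      using rel_reach_honest_Suc[OF F m, of t1] rel_reach_honest_Suc[OF F m, of t2] by linarith
  qed
qed

lemma rel_reach_bounded_honest_Suc:
  assumes F: "is_fork w F" and m: "m < length w" "\<not> w ! m" and IH: "rel_reach_bounded w F m"
  shows "rel_reach_bounded w F (Suc m)"
proof (rule rel_reach_bounded_SucI[OF m(1) _ min_rel_reach_honest_Suc[OF F m IH]])
  fix t assume t: "is_tine F t" "tlab F t \<le> Suc m"
  have rho: "rho_rec (take (Suc m) w) = max 0 (rho_rec (take m w) - 1)"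
    using m by (simp add: take_Suc_conv_app_nth rho_rec_snoc rho_step_def)
  show "rel_reach w F (Suc m) t \<le> rho_rec (take (Suc m) w)"
  proof (cases "tlab F t = Suc m")
    case True
    then show ?thesis using rel_reach_new_honest_tine(1)[OF F m t(1)] rho by simp
  next
    case False
    then have "rel_reach w F m t \<le> rho_rec (take m w)"
      using IH t unfolding rel_reach_bounded_def by simp
    then show ?thesis using rel_reach_honest_Suc[OF F m, of t] rho by simp
  qed
qed

lemma rel_reach_bounded: "is_fork w F \<Longrightarrow> m \<le> length w \<Longrightarrow> rel_reach_bounded w F m"
proof (induction m)
  case 0
  then show ?case using rel_reach_bounded_0 by simp
next
  case (Suc m)
  then show ?case
    using rel_reach_bounded_adversarial_Suc rel_reach_bounded_honest_Suc by (cases "w ! m") auto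
qed

lemma reach_le_rel_reach: "is_fork w F \<Longrightarrow> reach w F t \<le> rel_reach w F (length w) t"
proof -
  assume F: "is_fork w F"
  have "reserve w F t = adv_count w (tlab F t) (length w)"
    unfolding reserve_def adv_count_def by (rule arg_cong[where f = card]) (auto simp: adv_idx_def)
  then show ?thesis using honest_depth_le_height[OF F, of "length w"]
    by (simp add: reach_def gap_def rel_reach_def)
qed

lemma reach_le_rho_rec: "is_fork w F \<Longrightarrow> is_tine F t \<Longrightarrow> reach w F t \<le> rho_rec w"
  using rel_reach_bounded[of w F "length w"] reach_le_rel_reach[of w F t] tlab_le_length[of w F t]
  unfolding rel_reach_bounded_def by fastforce

lemma min_reach_le_mu_rec:
  assumes F: "is_fork w F" and k: "k \<le> length w" and t: "is_tine F t1" "is_tine F t2"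
    and disj: "disjoint_over F k t1 t2"
  shows "min (reach w F t1) (reach w F t2) \<le> mu_rec w k"
proof -
  have "min (rel_reach w F (length w) t1) (rel_reach w F (length w) t2) \<le> mu_rec w k"
    using rel_reach_bounded[OF F, of "length w"] k t disj tlab_le_length[OF F]
    unfolding rel_reach_bounded_def by simp
  then show ?thesis using reach_le_rel_reach[OF F, of t1] reach_le_rel_reach[OF F, of t2] by linarith
qed

section \<open>The recurrences are the maxima over closed forks\<close>

lemma reach_le_rho: "is_fork w F \<Longrightarrow> is_tine F t \<Longrightarrow> reach w F t \<le> rho w F"
  unfolding rho_def Setcompr_eq_image using finite_fork_tines by (intro Max_ge) auto

lemma rho_le_rho_rec:
  assumes F: "is_fork w F"
  shows "rho w F \<le> rho_rec w"
proof -
  have "reach w F ` {t. is_tine F t} \<noteq> {}" using fork_root_tine[OF F] by blast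
  then show ?thesis unfolding rho_def Setcompr_eq_image
    using finite_fork_tines[OF F] reach_le_rho_rec[OF F] by (subst Max_le_iff) auto
qed

lemma rho_nonneg: "is_fork w F \<Longrightarrow> 0 \<le> rho w F"
proof -
  assume F: "is_fork w F"
  obtain t where t: "is_tine F t" "tlen t = height F" using height_attained[OF F] by blast
  then have "0 \<le> reach w F t" by (simp add: reach_def gap_def)
  then show ?thesis using reach_le_rho[OF F t(1)] by simp
qed

lemma rho_str_eq_rho_rec: "closed_fork w F \<Longrightarrow> rho w F = rho_rec w \<Longrightarrow> rho_str w = rho_rec w"
proof -
  assume F: "closed_fork w F" and rho: "rho w F = rho_rec w"
  have bounds: "{rho w F | F. closed_fork w F} \<subseteq> {0..rho_rec w}"
    using rho_le_rho_rec rho_nonneg by (auto simp: closed_fork_def)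
  show ?thesis unfolding rho_str_def
  proof (rule Max_eqI)
    show "finite {rho w F | F. closed_fork w F}" using bounds finite_subset by blast
    show "rho_rec w \<in> {rho w F | F. closed_fork w F}" using F rho by force
  qed (use bounds in auto)
qed

lemma finite_disjoint_pair_values:
  "is_fork w F \<Longrightarrow> finite {min (reach w F t1) (reach w F t2) | t1 t2.
                              is_tine F t1 \<and> is_tine F t2 \<and> disjoint_over F k t1 t2}"
proof -
  assume F: "is_fork w F"
  have "{min (reach w F t1) (reach w F t2) | t1 t2. is_tine F t1 \<and> is_tine F t2 \<and> disjoint_over F k t1 t2}
      \<subseteq> (\<lambda>(t1, t2). min (reach w F t1) (reach w F t2)) ` ({t. is_tine F t} \<times> {t. is_tine F t})"
    by auto
  then show ?thesis using finite_fork_tines[OF F] finite_subset by blast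
qed

lemma min_reach_le_mu:
  "is_fork w F \<Longrightarrow> is_tine F t1 \<Longrightarrow> is_tine F t2 \<Longrightarrow> disjoint_over F k t1 t2 \<Longrightarrow>
   min (reach w F t1) (reach w F t2) \<le> mu w k F"
  unfolding mu_def using finite_disjoint_pair_values by (intro Max_ge) auto

lemma disjoint_over_root: "disjoint_over F k [r] [r]"
  by (simp add: disjoint_over_def tine_edges_def)

lemma mu_le_mu_rec:
  assumes F: "is_fork w F" and k: "k \<le> length w"
  shows "mu w k F \<le> mu_rec w k"
proof -
  let ?V = "{min (reach w F t1) (reach w F t2) | t1 t2.
              is_tine F t1 \<and> is_tine F t2 \<and> disjoint_over F k t1 t2}"
  have "?V \<noteq> {}" using fork_root_tine[OF F] disjoint_over_root by blast
  moreover have "\<forall>x \<in> ?V. x \<le> mu_rec w k" using min_reach_le_mu_rec[OF F k] by blast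
  ultimately show ?thesis
    unfolding mu_def using Max_le_iff[OF finite_disjoint_pair_values[OF F]] by blast
qed

lemma mu_ge_neg_length: "is_fork w F \<Longrightarrow> - int (length w) \<le> mu w k F"
proof -
  assume F: "is_fork w F"
  have "disjoint_over F k [root F] [root F]" by (rule disjoint_over_root)
  moreover have "- int (length w) \<le> reach w F [root F]"
    using height_le_length[OF F] by (simp add: reach_def gap_def tlen_def)
  ultimately show ?thesis using min_reach_le_mu[OF F fork_root_tine[OF F] fork_root_tine[OF F]] by force
qed

lemma mu_str_eq_mu_rec:
  "closed_fork w F \<Longrightarrow> k \<le> length w \<Longrightarrow> mu w k F = mu_rec w k \<Longrightarrow> mu_str w k = mu_rec w k"
proof -
  assume F: "closed_fork w F" and k: "k \<le> length w" and mu: "mu w k F = mu_rec w k"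
  have bounds: "{mu w k F | F. closed_fork w F} \<subseteq> {- int (length w)..mu_rec w k}"
    using mu_le_mu_rec mu_ge_neg_length k by (auto simp: closed_fork_def)
  show ?thesis unfolding mu_str_def
  proof (rule Max_eqI)
    show "finite {mu w k F | F. closed_fork w F}" using bounds finite_subset by blast
    show "mu_rec w k \<in> {mu w k F | F. closed_fork w F}" using F mu by force
  qed (use bounds in auto)
qed

lemma honest_prefix_reach_ge:
  "is_fork w F \<Longrightarrow> is_tine F r \<Longrightarrow> \<exists>r'. honest_tine w F r' \<and> prefix r' r \<and> reach w F r \<le> reach w F r'"
proof (induction "length r" arbitrary: r rule: less_induct)
  case less
  note F = less.prems(1) and r = less.prems(2)
  show ?case
  proof (cases "honest_vertex w F (last r)")
    case True
    then show ?thesis using r by (auto simp: honest_tine_def)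
  next
    case False
    then have "r \<noteq> [root F]" by (auto simp: honest_vertex_def)
    then have b: "is_tine F (butlast r)" "tlab F (butlast r) < tlab F r" "tlen (butlast r) + 1 = tlen r"
      using fork_tine_butlast[OF F r] by auto
    have "adv_idx w (tlab F r)"
      using False b(2) tlab_le_length[OF F r] by (auto simp: honest_vertex_def honest_idx_def adv_idx_def tlab_def)
    then have sub: "insert (tlab F r) {i. adv_idx w i \<and> tlab F r < i} \<subseteq> {i. adv_idx w i \<and> tlab F (butlast r) < i}"
      using b(2) by auto
    have fin: "finite {i. adv_idx w i \<and> tlab F (butlast r) < i}"
      by (rule finite_subset[of _ "{..length w}"]) (auto simp: adv_idx_def)
    have "card (insert (tlab F r) {i. adv_idx w i \<and> tlab F r < i}) = reserve w F r + 1"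
      unfolding reserve_def using finite_subset[OF _ fin] sub by simp
    then have "reserve w F r + 1 \<le> reserve w F (butlast r)"
      unfolding reserve_def using card_mono[OF fin sub] by simp
    then have "reach w F r \<le> reach w F (butlast r)" using b(3) by (simp add: reach_def gap_def)
    moreover obtain r' where "honest_tine w F r'" "prefix r' (butlast r)" "reach w F (butlast r) \<le> reach w F r'"
      using less.hyps[of "butlast r"] F b(1) tine_nonempty[OF r] by fastforce
    ultimately show ?thesis using prefixeq_butlast prefix_order.trans by fastforce
  qed
qed

section \<open>Forks built by A* attain the recurrences\<close>

definition optimal_pair :: "bool list \<Rightarrow> fork \<Rightarrow> nat \<Rightarrow> nat list \<Rightarrow> nat list \<Rightarrow> bool" where
  "optimal_pair w F k t1 t2 \<longleftrightarrow> honest_tine w F t1 \<and> honest_tine w F t2 \<and> disjoint_over F k t1 t2 \<and>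
     rho_rec w \<le> reach w F t1 \<and> mu_rec w k \<le> reach w F t2"

definition honest_optimal :: "bool list \<Rightarrow> fork \<Rightarrow> bool" where
  "honest_optimal w F \<longleftrightarrow> closed_fork w F \<and> (\<exists>t. honest_tine w F t \<and> rho_rec w \<le> reach w F t) \<and>
     (\<forall>k < length w. \<exists>t1 t2. optimal_pair w F k t1 t2)"

lemma optimal_pair_reach:
  assumes F: "is_fork w F" and k: "k \<le> length w" and p: "optimal_pair w F k t1 t2"
  shows "reach w F t1 = rho_rec w" and "reach w F t2 = mu_rec w k"
proof -
  have t: "is_tine F t1" "is_tine F t2" and disj: "disjoint_over F k t1 t2"
    using p by (simp_all add: optimal_pair_def honest_tine_def)
  show r1: "reach w F t1 = rho_rec w"
    using reach_le_rho_rec[OF F t(1)] p by (simp add: optimal_pair_def)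
  show "reach w F t2 = mu_rec w k"
    using reach_le_rho_rec[OF F t(2)] min_reach_le_mu_rec[OF F k t disj] mu_rec_le_rho_rec[OF k] r1 p
    by (simp add: optimal_pair_def)
qed

lemma honest_optimal_rho:
  assumes "honest_optimal w F"
  shows "\<exists>t. honest_tine w F t \<and> reach w F t = rho w F \<and> rho w F = rho_str w"
proof -
  have F: "closed_fork w F" and f: "is_fork w F" using assms by (simp_all add: honest_optimal_def closed_fork_def)
  obtain t where t: "honest_tine w F t" "rho_rec w \<le> reach w F t"
    using assms by (auto simp: honest_optimal_def)
  then have "reach w F t = rho w F" "rho w F = rho_rec w"
    using reach_le_rho[OF f] rho_le_rho_rec[OF f] by (fastforce simp: honest_tine_def)+
  then show ?thesis using t(1) rho_str_eq_rho_rec[OF F] by auto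
qed

lemma honest_optimal_mu:
  assumes opt: "honest_optimal w F" and k: "k < length w"
  shows "\<exists>t1 t2. honest_tine w F t1 \<and> honest_tine w F t2 \<and> witnesses_mu w k F t1 t2 \<and>
           mu w k F = mu_str w k"
proof -
  have F: "closed_fork w F" and f: "is_fork w F" using opt by (simp_all add: honest_optimal_def closed_fork_def)
  obtain t1 t2 where p: "optimal_pair w F k t1 t2" using opt k by (auto simp: honest_optimal_def)
  then have t: "is_tine F t1" "is_tine F t2" and disj: "disjoint_over F k t1 t2"
    by (simp_all add: optimal_pair_def honest_tine_def)
  have r1: "reach w F t1 = rho_rec w" and r2: "reach w F t2 = mu_rec w k"
    using optimal_pair_reach[OF f _ p] k by simp_all
  then have "rho w F = rho_rec w"
    using reach_le_rho[OF f t(1)] rho_le_rho_rec[OF f] by simp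
  moreover have "mu w k F = mu_rec w k"
    using mu_le_mu_rec[OF f less_imp_le[OF k]] min_reach_le_mu[OF f t disj] r1 r2
      mu_rec_le_rho_rec[of k w] k by simp
  ultimately show ?thesis using p t disj r1 r2 mu_str_eq_mu_rec[OF F] k
    by (auto simp: optimal_pair_def witnesses_mu_def)
qed

lemma trivial_fork_tine_iff: "trivial_fork F \<Longrightarrow> is_tine F t \<longleftrightarrow> t = [root F]"
proof
  assume F: "trivial_fork F" and t: "is_tine F t"
  show "t = [root F]"
  proof (rule ccontr)
    assume "t \<noteq> [root F]"
    then have "t ! 1 \<in> verts F" "t ! 1 \<noteq> root F"
      using tine_length_ge_2[OF t] tine_nth_neq_root[OF t, of 1] tine_subset_verts[OF t] by auto
    then show False using F by (simp add: trivial_fork_def)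
  qed
qed (simp add: is_tine_def trivial_fork_def)

lemma honest_optimal_trivial:
  assumes F: "trivial_fork F"
  shows "honest_optimal [] F"
proof -
  have "closed_fork [] F"
    using trivial_fork_tine_iff[OF F] F
    by (auto simp: closed_fork_def is_fork_def is_leaf_def honest_vertex_def honest_idx_def trivial_fork_def)
  moreover have "{t. is_tine F t} = {[root F]}" using trivial_fork_tine_iff[OF F] by blast
  then have "height F = 0" unfolding height_def by (simp add: tlen_def)
  then have "reach [] F [root F] = 0" by (simp add: reach_def reserve_def gap_def adv_idx_def tlen_def)
  ultimately show ?thesis unfolding honest_optimal_def
    using trivial_fork_tine_iff[OF F] by (auto simp: honest_tine_def honest_vertex_def)
qed

lemma honest_idx_snoc_True: "honest_idx (w @ [True]) i \<longleftrightarrow> honest_idx w i"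
  by (auto simp: honest_idx_def nth_append le_Suc_eq)

lemma adv_idx_snoc_True: "adv_idx (w @ [True]) i \<longleftrightarrow> adv_idx w i \<or> i = Suc (length w)"
  by (auto simp: adv_idx_def nth_append le_Suc_eq)

lemma honest_idx_snoc_False: "honest_idx (w @ [False]) i \<longleftrightarrow> honest_idx w i \<or> i = Suc (length w)"
  by (auto simp: honest_idx_def nth_append le_Suc_eq)

lemma adv_idx_snoc_False: "adv_idx (w @ [False]) i \<longleftrightarrow> adv_idx w i"
  by (auto simp: adv_idx_def nth_append le_Suc_eq)

lemma honest_tine_snoc_True: "honest_tine (w @ [True]) F t \<longleftrightarrow> honest_tine w F t"
  by (simp add: honest_tine_def honest_vertex_def honest_idx_snoc_True)

lemma closed_fork_snoc_True: "closed_fork w F \<Longrightarrow> closed_fork (w @ [True]) F"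
  unfolding closed_fork_def is_fork_def honest_vertex_def honest_idx_snoc_True
  by (auto intro: le_SucI)

lemma reach_snoc_True: "is_fork w F \<Longrightarrow> is_tine F t \<Longrightarrow> reach (w @ [True]) F t = reach w F t + 1"
proof -
  assume F: "is_fork w F" and t: "is_tine F t"
  have "{i. adv_idx (w @ [True]) i \<and> tlab F t < i} = insert (Suc (length w)) {i. adv_idx w i \<and> tlab F t < i}"
    using tlab_le_length[OF F t] by (auto simp: adv_idx_snoc_True)
  moreover have "finite {i. adv_idx w i \<and> tlab F t < i}"
    by (rule finite_subset[of _ "{..length w}"]) (auto simp: adv_idx_def)
  ultimately show ?thesis by (simp add: reach_def reserve_def gap_def adv_idx_def)
qed

lemma honest_optimal_snoc_True:
  assumes opt: "honest_optimal w F"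
  shows "honest_optimal (w @ [True]) F"
proof -
  have F: "closed_fork w F" and f: "is_fork w F" using opt by (simp_all add: honest_optimal_def closed_fork_def)
  have rho: "rho_rec (w @ [True]) = rho_rec w + 1" by (simp add: rho_rec_snoc rho_step_def)
  have reach: "reach (w @ [True]) F t = reach w F t + 1" if "honest_tine w F t" for t
    using reach_snoc_True[OF f] that by (simp add: honest_tine_def)
  obtain tau where tau: "honest_tine w F tau" "rho_rec w \<le> reach w F tau"
    using opt by (auto simp: honest_optimal_def)
  have "\<exists>t1 t2. optimal_pair (w @ [True]) F k t1 t2" if k: "k < length (w @ [True])" for k
  proof (cases "k = length w")
    case True
    then have "mu_rec (w @ [True]) k = rho_rec w + 1"
      using mu_rec_snoc[of k w True] mu_rec_length[of w] by (simp add: mu_step_def)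
    moreover have "disjoint_over F k tau tau"
      using disjoint_over_length[OF f] tau(1) True by (simp add: honest_tine_def)
    ultimately show ?thesis using tau reach rho
      by (intro exI[of _ tau]) (simp add: optimal_pair_def honest_tine_snoc_True)
  next
    case False
    then have "k < length w" using k by simp
    then obtain t1 t2 where "optimal_pair w F k t1 t2" using opt by (auto simp: honest_optimal_def)
    moreover have "mu_rec (w @ [True]) k = mu_rec w k + 1"
      using mu_rec_snoc[of k w True] \<open>k < length w\<close> by (simp add: mu_step_def)
    ultimately show ?thesis using reach rho
      by (intro exI[of _ t1] exI[of _ t2]) (simp add: optimal_pair_def honest_tine_snoc_True)
  qed
  then show ?thesis using closed_fork_snoc_True[OF F] tau reach rho
    by (auto simp: honest_optimal_def honest_tine_snoc_True)
qed

lemma finite_divergence_labels: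
  "is_fork w F \<Longrightarrow>
   finite {lab F (last (longest_common_prefix s r)) | r. is_tine F r \<and> reach w F r = rho w F}"
proof -
  assume F: "is_fork w F"
  have "{lab F (last (longest_common_prefix s r)) | r. is_tine F r \<and> reach w F r = rho w F}
     \<subseteq> (\<lambda>r. lab F (last (longest_common_prefix s r))) ` {t. is_tine F t}" by auto
  then show ?thesis using finite_fork_tines[OF F] finite_subset by blast
qed

lemma divg_le:
  assumes F: "is_fork w F" and r: "is_tine F r" "reach w F r = rho w F"
  shows "divg w F s \<le> lab F (last (longest_common_prefix s r))"
  unfolding divg_def by (rule Min_le[OF finite_divergence_labels[OF F]]) (use r in auto)

lemma divg_attained:
  assumes F: "is_fork w F" and r: "is_tine F r" "reach w F r = rho w F"
  obtains r' where "is_tine F r'" "reach w F r' = rho w F"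
    "lab F (last (longest_common_prefix s r')) = divg w F s"
proof -
  have "divg w F s \<in> {lab F (last (longest_common_prefix s r)) | r. is_tine F r \<and> reach w F r = rho w F}"
    unfolding divg_def by (rule Min_in[OF finite_divergence_labels[OF F]]) (use r in auto)
  then show ?thesis using that by auto
qed

locale conservative_extension =
  fixes w :: "bool list" and F F' :: fork and s new :: "nat list"
  assumes closed: "closed_fork w F" and s: "is_tine F s"
    and closed': "closed_fork (w @ [False]) F'" and sub: "subfork F F'"
    and new_fresh: "set new \<inter> verts F = {}" and verts': "verts F' = verts F \<union> set new"
    and sigma: "is_tine F' (s @ new)" and new_ne: "new \<noteq> []"
    and lab_sigma: "lab F' (last new) = Suc (length w)"
    and len_sigma: "tlen (s @ new) = height F + 1"
begin

lemma fork: "is_fork w F"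
  using closed by (simp add: closed_fork_def)

lemma fork': "is_fork (w @ [False]) F'"
  using closed' by (simp add: closed_fork_def)

lemma lab_eq: "v \<in> verts F \<Longrightarrow> lab F' v = lab F v"
  using sub by (simp add: subfork_def)

lemma tine_extend:
  assumes t: "is_tine F t"
  shows "is_tine F' t"
  unfolding is_tine_def
proof (intro conjI allI impI)
  have "root F' = root F" "verts F \<subseteq> verts F'" using sub by (simp_all add: subfork_def)
  then show "t \<noteq> []" "hd t = root F'" "set t \<subseteq> verts F'" using t by (auto simp: is_tine_def)
next
  fix i assume i: "Suc i < length t"
  then have "t ! Suc i \<noteq> root F" "par F (t ! Suc i) = t ! i" "t ! Suc i \<in> verts F"
    using t by (auto simp: is_tine_def)
  then show "t ! Suc i \<noteq> root F'" "par F' (t ! Suc i) = t ! i" using sub by (auto simp: subfork_def)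
qed

lemma tine_restrict:
  assumes t: "is_tine F' t" and last: "last t \<in> verts F"
  shows "is_tine F t"
proof -
  obtain u where "is_tine F u" "last u = last t" using fork last unfolding is_fork_def by blast
  then show ?thesis using tine_extend t tine_eq_if_last_eq by metis
qed

lemma tlab_eq: "is_tine F t \<Longrightarrow> tlab F' t = tlab F t"
  using lab_eq tine_subset_verts tine_nonempty last_in_set by (metis subsetD tlab_def)

lemma tlen_le:
  assumes t: "is_tine F' t"
  shows "tlen t \<le> height F + 1"
proof (cases "last t \<in> verts F")
  case True
  then show ?thesis using tine_restrict[OF t] tlen_le_height[OF fork] by fastforce
next
  case False
  have "last t \<in> verts F'" using tine_subset_verts[OF t] tine_nonempty[OF t] by auto
  then have "last t \<in> set (s @ new)" using verts' False by auto
  then obtain i where i: "i < length (s @ new)" "(s @ new) ! i = last t" by (meson in_set_conv_nth)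
  then have "take (Suc i) (s @ new) = t"
    using tine_take_Suc[OF sigma i(1)] t tine_eq_if_last_eq by metis
  then show ?thesis using len_sigma by (auto simp: tlen_def)
qed

lemma height': "height F' = height F + 1"
proof -
  obtain t where "is_tine F' t" "tlen t = height F'" using height_attained[OF fork'] by blast
  then show ?thesis using tlen_le tlen_le_height[OF fork' sigma] len_sigma by fastforce
qed

lemma reach_extend: "is_tine F t \<Longrightarrow> reach (w @ [False]) F' t = reach w F t - 1"
  by (simp add: reach_def reserve_def gap_def height' tlab_eq adv_idx_snoc_False)

lemma reach_sigma: "reach (w @ [False]) F' (s @ new) = 0"
proof -
  have "tlab F' (s @ new) = Suc (length w)" using lab_sigma new_ne by (simp add: tlab_def)
  then have "{i. adv_idx (w @ [False]) i \<and> tlab F' (s @ new) < i} = {}" by (auto simp: adv_idx_def)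
  then show ?thesis unfolding reach_def reserve_def gap_def by (simp only: card.empty) (simp add: height' len_sigma)
qed

lemma honest_tine_extend:
  assumes "honest_tine w F t"
  shows "honest_tine (w @ [False]) F' t"
proof -
  have t: "is_tine F t" using assms by (simp add: honest_tine_def)
  have "root F' = root F" using sub by (simp add: subfork_def)
  moreover have "lab F' (last t) = lab F (last t)" using tlab_eq[OF t] by (simp add: tlab_def)
  ultimately show ?thesis using assms tine_extend[OF t]
    by (auto simp: honest_tine_def honest_vertex_def honest_idx_snoc_False)
qed

lemma honest_sigma: "honest_tine (w @ [False]) F' (s @ new)"
  using sigma lab_sigma new_ne by (simp add: honest_tine_def honest_vertex_def honest_idx_snoc_False)

lemma disjoint_extend:
  assumes a: "is_tine F a" and b: "is_tine F b" and disj: "disjoint_over F k a b"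
  shows "disjoint_over F' k a b"
proof (rule disjoint_overI)
  show "\<forall>v \<in> set a \<inter> set b. lab F' v \<le> k"
    using disj disjoint_over_iff[OF fork a b] lab_eq tine_subset_verts[OF a] by auto
qed

lemma disjoint_sigma:
  assumes x: "is_tine F x" and disj: "disjoint_over F k s x"
  shows "disjoint_over F' k (s @ new) x"
proof (rule disjoint_overI)
  have "set (s @ new) \<inter> set x \<subseteq> set s \<inter> set x"
    using new_fresh tine_subset_verts[OF x] by auto
  then show "\<forall>v \<in> set (s @ new) \<inter> set x. lab F' v \<le> k"
    using disj disjoint_over_iff[OF fork s x] lab_eq tine_subset_verts[OF x] by fastforce
qed

lemma disjoint_extend_length:
  assumes a: "is_tine F a"
  shows "disjoint_over F' (length w) a b"
proof (rule disjoint_overI)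
  show "\<forall>v \<in> set a \<inter> set b. lab F' v \<le> length w"
    using fork_lab_le_length[OF fork a] lab_eq tine_subset_verts[OF a] by auto
qed

lemma disjoint_sigma_length: "is_tine F x \<Longrightarrow> disjoint_over F' (length w) (s @ new) x"
  using disjoint_extend_length disjoint_over_commute by blast

lemma rho_optimal_extend:
  assumes opt: "honest_optimal w F"
  shows "\<exists>t. honest_tine (w @ [False]) F' t \<and> rho_rec (w @ [False]) \<le> reach (w @ [False]) F' t"
proof -
  obtain tau where tau: "honest_tine w F tau" "rho_rec w \<le> reach w F tau"
    using opt by (auto simp: honest_optimal_def)
  show ?thesis
  proof (cases "0 < rho_rec w")
    case True
    then show ?thesis using honest_tine_extend[OF tau(1)] reach_extend tau
      by (intro exI[of _ tau]) (simp add: honest_tine_def rho_rec_snoc rho_step_def)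
  next
    case False
    then show ?thesis using honest_sigma reach_sigma
      by (intro exI[of _ "s @ new"]) (simp add: rho_rec_snoc rho_step_def)
  qed
qed

lemma optimal_pair_extend_length:
  assumes opt: "honest_optimal w F"
  shows "\<exists>t1 t2. optimal_pair (w @ [False]) F' (length w) t1 t2"
proof -
  obtain tau where tau: "honest_tine w F tau" "rho_rec w \<le> reach w F tau"
    using opt by (auto simp: honest_optimal_def)
  then have t: "is_tine F tau" by (simp add: honest_tine_def)
  have mu: "mu_rec (w @ [False]) (length w) = rho_rec w - 1"
    using mu_rec_snoc[of "length w" w False] mu_rec_length[of w] by (simp add: mu_step_def)
  show ?thesis
  proof (cases "0 < rho_rec w")
    case True
    then show ?thesis
      using honest_tine_extend[OF tau(1)] reach_extend[OF t] tau(2) mu disjoint_extend_length[OF t]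
      by (intro exI[of _ tau]) (simp add: optimal_pair_def rho_rec_snoc rho_step_def)
  next
    case False
    then have "optimal_pair (w @ [False]) F' (length w) (s @ new) tau"
      using honest_tine_extend[OF tau(1)] reach_extend[OF t] tau(2) mu disjoint_sigma_length[OF t]
        honest_sigma reach_sigma
      by (simp add: optimal_pair_def rho_rec_snoc rho_step_def)
    then show ?thesis by blast
  qed
qed

lemma optimal_pair_extend:
  assumes k: "k < length w" and p: "optimal_pair w F k t1 t2"
    and margin: "\<not> (mu_rec w k = 0 \<and> 0 < rho_rec w)"
  shows "\<exists>t1' t2'. optimal_pair (w @ [False]) F' k t1' t2'"
proof -
  have t: "is_tine F t1" "is_tine F t2" and disj: "disjoint_over F k t1 t2"
    using p by (simp_all add: optimal_pair_def honest_tine_def)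
  have mu: "mu_rec (w @ [False]) k = mu_rec w k - 1"
    using mu_rec_snoc[of k w False] k margin by (auto simp: mu_step_def)
  show ?thesis
  proof (cases "0 < rho_rec w")
    case True
    then show ?thesis
      using p mu reach_extend[OF t(1)] reach_extend[OF t(2)] disjoint_extend[OF t disj]
        honest_tine_extend
      by (intro exI[of _ t1] exI[of _ t2]) (simp add: optimal_pair_def rho_rec_snoc rho_step_def)
  next
    case False
    then have rho: "rho_rec (w @ [False]) = 0" "mu_rec w k \<le> 0"
      using mu_rec_le_rho_rec[of k w] k by (simp_all add: rho_rec_snoc rho_step_def)
    have "disjoint_over F k s t1 \<or> disjoint_over F k s t2"
      using disjoint_over_ultrametric[OF fork s t disj] .
    then have "optimal_pair (w @ [False]) F' k (s @ new) t1 \<or> optimal_pair (w @ [False]) F' k (s @ new) t2"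
      using p rho mu reach_extend[OF t(1)] reach_extend[OF t(2)] disjoint_sigma[OF t(1)]
        disjoint_sigma[OF t(2)] honest_sigma reach_sigma honest_tine_extend rho_rec_nonneg[of w]
      by (auto simp: optimal_pair_def)
    then show ?thesis by blast
  qed
qed

text \<open>Here the rule of A* matters: some reach-0 tine diverges from a maximal-reach tine at a label
  at most \<open>k\<close>, hence so does \<open>s\<close>.\<close>

lemma optimal_pair_extend_astar_choice:
  assumes choice: "astar_choice w F s" and k: "k < length w" and p: "optimal_pair w F k t1 t2"
    and margin: "mu_rec w k = 0" "0 < rho_rec w"
  shows "\<exists>t1' t2'. optimal_pair (w @ [False]) F' k t1' t2'"
proof -
  have t: "is_tine F t1" "is_tine F t2" and disj: "disjoint_over F k t1 t2"
    using p by (simp_all add: optimal_pair_def honest_tine_def)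
  have r1: "reach w F t1 = rho_rec w" and r2: "reach w F t2 = 0"
    using optimal_pair_reach[OF fork _ p] k margin by simp_all
  then have rho: "reach w F t1 = rho w F"
    using reach_le_rho[OF fork t(1)] rho_le_rho_rec[OF fork] by simp
  have "\<exists>t. is_tine F t \<and> reach w F t = 0" using t(2) r2 by blast
  then have "\<forall>t. is_tine F t \<and> reach w F t = 0 \<longrightarrow> divg w F s \<le> divg w F t"
    using choice unfolding astar_choice_def by simp
  then have "divg w F s \<le> divg w F t2" using t(2) r2 by blast
  also have "\<dots> \<le> lab F (last (longest_common_prefix t2 t1))" using divg_le[OF fork t(1) rho] .
  also have "\<dots> \<le> k"
    using disj disjoint_over_commute disjoint_over_iff_lcp[OF fork t(2,1)] by blast
  finally have "divg w F s \<le> k" .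
  moreover obtain r where r: "is_tine F r" "reach w F r = rho w F"
    "lab F (last (longest_common_prefix s r)) = divg w F s"
    using divg_attained[OF fork t(1) rho] .
  ultimately have "disjoint_over F k s r" using disjoint_over_iff_lcp[OF fork s r(1)] by simp
  moreover obtain r' where r': "honest_tine w F r'" "prefix r' r" "reach w F r \<le> reach w F r'"
    using honest_prefix_reach_ge[OF fork r(1)] by blast
  ultimately have "disjoint_over F k s r'" using disjoint_over_mono_prefix by blast
  then have "disjoint_over F' k r' (s @ new)"
    using disjoint_sigma r'(1) disjoint_over_commute by (auto simp: honest_tine_def)
  moreover have "rho_rec (w @ [False]) \<le> reach (w @ [False]) F' r'"
    using reach_extend r' r(2) rho r1 margin(2) by (simp add: honest_tine_def rho_rec_snoc rho_step_def)
  moreover have "mu_rec (w @ [False]) k = 0"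
    using mu_rec_snoc[of k w False] k margin by (simp add: mu_step_def)
  ultimately have "optimal_pair (w @ [False]) F' k r' (s @ new)"
    using honest_tine_extend[OF r'(1)] honest_sigma reach_sigma by (simp add: optimal_pair_def)
  then show ?thesis by blast
qed

lemma honest_optimal_extend:
  assumes opt: "honest_optimal w F" and choice: "astar_choice w F s"
  shows "honest_optimal (w @ [False]) F'"
proof -
  have "\<exists>t1 t2. optimal_pair (w @ [False]) F' k t1 t2" if k: "k < length (w @ [False])" for k
  proof (cases "k = length w")
    case True
    then show ?thesis using optimal_pair_extend_length[OF opt] by simp
  next
    case False
    then have k: "k < length w" using k by simp
    then obtain t1 t2 where "optimal_pair w F k t1 t2" using opt by (auto simp: honest_optimal_def)
    then show ?thesis
      using optimal_pair_extend[OF k] optimal_pair_extend_astar_choice[OF choice k] by blast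
  qed
  then show ?thesis using closed' rho_optimal_extend[OF opt] by (simp add: honest_optimal_def)
qed

end

lemma cons_ext_conservative_extension:
  "cons_ext w F s F' \<Longrightarrow> \<exists>new. conservative_extension w F F' s new"
  unfolding cons_ext_def conservative_extension_def by auto

lemma honest_optimal_astar_step:
  assumes opt: "honest_optimal w F" and step: "astar_step w b F F'"
  shows "honest_optimal (w @ [b]) F'"
proof (cases b)
  case True
  then show ?thesis using step honest_optimal_snoc_True[OF opt] by (simp add: astar_step_def)
next
  case False
  then obtain s where choice: "astar_choice w F s" and "cons_ext w F s F'"
    using step by (auto simp: astar_step_def)
  then obtain new where "conservative_extension w F F' s new"
    using cons_ext_conservative_extension by blast
  then have "honest_optimal (w @ [False]) F'"
    using conservative_extension.honest_optimal_extend opt choice by blast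
  then show ?thesis using False by simp
qed

lemma honest_optimal_astar_run: "astar_run w F \<Longrightarrow> honest_optimal w F"
  by (induction rule: astar_run.induct) (auto intro: honest_optimal_trivial honest_optimal_astar_step)

lemma astar_step_subfork: "astar_step w b F F' \<Longrightarrow> subfork F F'"
  by (cases b) (auto simp: astar_step_def cons_ext_def subfork_def)

theorem theorem5:
  fixes w :: "bool list" and b :: bool and F F' :: fork
  assumes "astar_run w F"
    and "astar_step w b F F'"
    and "canonical w F"
  shows "canonical (w @ [b]) F'"
proof (rule canonical.step[OF assms(3)])
  have opt: "honest_optimal (w @ [b]) F'"
    using honest_optimal_astar_step[OF honest_optimal_astar_run[OF assms(1)] assms(2)] .
  then show "closed_fork (w @ [b]) F'" by (simp add: honest_optimal_def)
  show "subfork F F'" using assms(2) by (rule astar_step_subfork)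
  show "\<exists>t. honest_tine (w @ [b]) F' t \<and> reach (w @ [b]) F' t = rho (w @ [b]) F' \<and>
          rho (w @ [b]) F' = rho_str (w @ [b])"
    using honest_optimal_rho[OF opt] .
  show "\<forall>k < length (w @ [b]). \<exists>t1 t2. honest_tine (w @ [b]) F' t1 \<and> honest_tine (w @ [b]) F' t2 \<and>
          witnesses_mu (w @ [b]) k F' t1 t2 \<and> mu (w @ [b]) k F' = mu_str (w @ [b]) k"
    using honest_optimal_mu[OF opt] by blast
qed

end
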